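(* Let $n_1,\dots,n_l\ge2$ be integers, and suppose there are integers $1\le j\le k\le l-1$ such that $n_j\ge3$ and $u_j+u_{j+1}+v_j+v_{j+1}\le q$. Let $(n_1',\dots,n_l')$ be obtained from $(n_1,\dots,n_l)$ by replacing $n_k$ by $n_k+1$, and let $q',u_i',v_i'$ be the corresponding quantities for $(n_1',\dots,n_l')$. Then $u_j'+u_{j+1}'+v_j'+v_{j+1}'\le q'$.
   Context: For integers $m_1,\dots,m_r\ge2$, $|[m_1,\dots,m_r]|$ is the absolute value of the determinant of the tridiagonal $r\times r$ matrix with diagonal entries $-m_1,\dots,-m_r$ and $1$'s directly above and below the diagonal (empty bracket $=1$). For $(n_1,\dots,n_l)$: $q=|[n_1,\dots,n_l]|$; $u_0=0$, $u_1=1$, $u_s=|[n_1,\dots,n_{s-1}]|$ for $2\le s\le l+1$; $v_s=|[n_{s+1},\dots,n_l]|$ for $0\le s\le l-1$, $v_l=1$, $v_{l+1}=0$. *)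

theory Defs
  imports "Jordan_Normal_Form.Determinant"
begin

definition tri_mat :: "int list \<Rightarrow> int mat" where
  "tri_mat ms = mat (length ms) (length ms)
     (\<lambda>(i, j). if i = j then - (ms ! i)
              else if i = j + 1 \<or> j = i + 1 then 1 else 0)"

text \<open>|[m_1,...,m_r]|; the empty bracket is the determinant of the 0x0 matrix, i.e. 1.\<close>
definition bracket :: "int list \<Rightarrow> int" where
  "bracket ms = \<bar>det (tri_mat ms)\<bar>"

text \<open>For ns = (n_1,...,n_l): u_0 = 0, u_s = |[n_1,...,n_{s-1}]| (so u_1 = 1).\<close>
definition u_seq :: "int list \<Rightarrow> nat \<Rightarrow> int" where
  "u_seq ns s = (if s = 0 then 0 else bracket (take (s - 1) ns))"

text \<open>v_s = |[n_{s+1},...,n_l]| for s \<le> l (so v_l = 1), v_{l+1} = 0.\<close>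
definition v_seq :: "int list \<Rightarrow> nat \<Rightarrow> int" where
  "v_seq ns s = (if s > length ns then 0 else bracket (drop s ns))"

end

theory Submission imports Defs begin

text \<open>The brackets are continuants: expanding along the first column gives
  [a, b, ...] = a [b, ...] - [...], so for entries \<ge> 2 they are positive and decrease when
  the first entry is removed. Continuants are affine in each entry: raising the middle entry
  of xs @ y # ys by one adds [xs][ys]. Hence q grows by [n_1..n_{k-1}][n_{k+1}..n_l], while
  u_j + u_{j+1} + v_j + v_{j+1} grows by at most that much: for j = k the increase is
  [n_1..n_{k-1}]; for j < k it is ([n_{j+1}..n_{k-1}] + [n_{j+2}..n_{k-1}]) [n_{k+1}..n_l],
  and n_j \<ge> 3 makes the first factor at most [n_j..n_{k-1}] \<le> [n_1..n_{k-1}].\<close>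

fun continuant :: "'a::comm_ring_1 list \<Rightarrow> 'a" where
  "continuant [] = 1"
| "continuant [a] = a"
| "continuant (a # b # ms) = a * continuant (b # ms) - continuant ms"

lemma tri_mat_carrier: "tri_mat ms \<in> carrier_mat (length ms) (length ms)"
  by (simp add: tri_mat_def)

lemma tri_mat_index:
  "i < length ms \<Longrightarrow> j < length ms \<Longrightarrow> tri_mat ms $$ (i, j) =
    (if i = j then - (ms ! i) else if i = j + 1 \<or> j = i + 1 then 1 else 0)"
  by (simp add: tri_mat_def)

lemma mat_delete_index:
  "i < dim_row A - 1 \<Longrightarrow> j < dim_col A - 1 \<Longrightarrow> mat_delete A r c $$ (i, j) =
    A $$ (if i < r then i else Suc i, if j < c then j else Suc j)"
  by (simp add: mat_delete_def)

lemma mat_delete_tri_mat_Cons: "mat_delete (tri_mat (a # ms)) 0 0 = tri_mat ms"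
  by (rule eq_matI) (simp_all add: mat_delete_index tri_mat_index tri_mat_def)

lemma det_mat_delete_tri_mat_1_0:
  "det (mat_delete (tri_mat (a # b # ms)) 1 0) = det (tri_mat ms)"
proof -
  define N where "N = mat_delete (tri_mat (a # b # ms)) 1 0"
  have N: "N \<in> carrier_mat (Suc (length ms)) (Suc (length ms))"
    by (simp add: N_def tri_mat_def mat_delete_def)
  have N_row_0: "N $$ (0, j) = (if j = 0 then 1 else 0)" if "j < Suc (length ms)" for j
    using that by (simp add: N_def mat_delete_index tri_mat_index tri_mat_def)
  have "det N = (\<Sum>j<Suc (length ms). N $$ (0, j) * cofactor N 0 j)"
    by (rule laplace_expansion_row[OF N]) simp
  also have "\<dots> = cofactor N 0 0"
    by (simp add: N_row_0 sum.lessThan_Suc_shift del: sum.lessThan_Suc)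
  also have "mat_delete N 0 0 = tri_mat ms"
    by (rule eq_matI) (simp_all add: N_def mat_delete_index tri_mat_index tri_mat_def)
  then have "cofactor N 0 0 = det (tri_mat ms)"
    by (simp add: cofactor_def)
  finally show ?thesis
    by (simp add: N_def)
qed

lemma det_tri_mat: "det (tri_mat ms) = (-1) ^ length ms * continuant ms"
proof (induction ms rule: continuant.induct)
  case 1
  show ?case by (simp add: det_def tri_mat_def)
next
  case (2 a)
  have "det (tri_mat [a]) = tri_mat [a] $$ (0, 0) * cofactor (tri_mat [a]) 0 0"
    using laplace_expansion_column[OF tri_mat_carrier[of "[a]"], of 0] by simp
  then show ?case
    by (simp add: tri_mat_index cofactor_def mat_delete_tri_mat_Cons det_def tri_mat_def)
next
  case (3 a b ms)
  define M where "M = tri_mat (a # b # ms)"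
  have M: "M \<in> carrier_mat (length ms + 2) (length ms + 2)"
    using tri_mat_carrier[of "a # b # ms"] by (simp add: M_def)
  have M_col_0: "M $$ (i, 0) = (if i = 0 then - a else if i = 1 then 1 else 0)"
    if "i < length ms + 2" for i
    using that by (auto simp: M_def tri_mat_index)
  have "det M = (\<Sum>i<length ms + 2. M $$ (i, 0) * cofactor M i 0)"
    by (rule laplace_expansion_column[OF M]) simp
  also have "\<dots> = - a * cofactor M 0 0 + cofactor M 1 0"
    by (simp add: M_col_0 sum.lessThan_Suc_shift del: sum.lessThan_Suc)
  also have "\<dots> = - a * det (tri_mat (b # ms)) - det (tri_mat ms)"
    using det_mat_delete_tri_mat_1_0[of a b ms]
    by (simp add: cofactor_def M_def mat_delete_tri_mat_Cons)
  finally show ?case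
    using 3 by (simp add: M_def algebra_simps)
qed

lemma continuant_pos_and_tl_le:
  fixes ms :: "'a::linordered_idom list"
  assumes "\<forall>x\<in>set ms. x \<ge> 2"
  shows "1 \<le> continuant ms \<and> continuant (tl ms) \<le> continuant ms"
  using assms
proof (induction ms rule: continuant.induct)
  case (3 a b ms)
  then have "a \<ge> 2" "1 \<le> continuant (b # ms)" "continuant ms \<le> continuant (b # ms)"
    by auto
  moreover from this have "2 * continuant (b # ms) \<le> a * continuant (b # ms)"
    by (intro mult_right_mono) auto
  ultimately have "1 \<le> a * continuant (b # ms) - continuant ms"
    "continuant (b # ms) \<le> a * continuant (b # ms) - continuant ms"
    by linarith+
  then show ?case by simp
qed auto

lemma continuant_pos:
  fixes ms :: "'a::linordered_idom list"
  shows "\<forall>x\<in>set ms. x \<ge> 2 \<Longrightarrow> 1 \<le> continuant ms"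
  using continuant_pos_and_tl_le by blast

lemma continuant_drop_le:
  fixes ms :: "'a::linordered_idom list"
  assumes "\<forall>x\<in>set ms. x \<ge> 2"
  shows "continuant (drop m ms) \<le> continuant ms"
proof (induction m)
  case (Suc m)
  have "\<forall>x\<in>set (drop m ms). x \<ge> 2"
    using assms set_drop_subset by fast
  then have "continuant (tl (drop m ms)) \<le> continuant (drop m ms)"
    using continuant_pos_and_tl_le by blast
  with Suc show ?case by (simp add: drop_Suc tl_drop)
qed simp

lemma continuant_two_tails_le:
  fixes ms :: "'a::linordered_idom list"
  assumes "a \<ge> 3" and "\<forall>x\<in>set ms. x \<ge> 2"
  shows "continuant ms + continuant (tl ms) \<le> continuant (a # ms)"
proof (cases ms)
  case (Cons b ms')
  have "1 \<le> continuant ms" "continuant (tl ms) \<le> continuant ms"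
    using continuant_pos_and_tl_le[OF assms(2)] by auto
  moreover from this have "3 * continuant ms \<le> a * continuant ms"
    using assms(1) by (intro mult_right_mono) auto
  ultimately have "continuant ms + continuant (tl ms) \<le> a * continuant ms - continuant (tl ms)"
    by linarith
  then show ?thesis by (simp add: Cons)
qed (use assms in simp)

lemma continuant_increment:
  "continuant (xs @ (y + 1) # ys) = continuant (xs @ y # ys) + continuant xs * continuant ys"
  by (induction xs rule: continuant.induct) (cases ys; simp add: algebra_simps)+

lemma continuant_drop_increment_le:
  fixes ys :: "'a::linordered_idom list"
  assumes "\<forall>x\<in>set ys. x \<ge> 2"
  shows "continuant (drop m (xs @ (y + 1) # ys))
    \<le> continuant (drop m (xs @ y # ys)) + continuant (drop m xs) * continuant ys"
proof (cases "m \<le> length xs")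
  case True
  then show ?thesis by (simp add: continuant_increment)
next
  case False
  then obtain n where "m = Suc (length xs + n)"
    by (metis add_Suc_right le_add1 less_imp_Suc_add not_le)
  then show ?thesis using continuant_pos[OF assms] by simp
qed

lemma bracket_eq_continuant: "\<forall>x\<in>set ms. x \<ge> 2 \<Longrightarrow> bracket ms = continuant ms"
  using continuant_pos[of ms] by (simp add: bracket_def det_tri_mat abs_mult power_abs)

definition uv_sum :: "int list \<Rightarrow> nat \<Rightarrow> int" where
  "uv_sum ns j = continuant (take (j - 1) ns) + continuant (take j ns)
    + continuant (drop j ns) + continuant (drop (Suc j) ns)"

lemma uv_sum_eq:
  assumes "\<forall>x\<in>set ns. x \<ge> 2" and "1 \<le> j" and "j < length ns"
  shows "u_seq ns j + u_seq ns (j + 1) + v_seq ns j + v_seq ns (j + 1) = uv_sum ns j"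
proof -
  have "\<forall>x\<in>set (take n ns). x \<ge> 2" "\<forall>x\<in>set (drop n ns). x \<ge> 2" for n
    using assms(1) by (auto dest: in_set_takeD in_set_dropD)
  then show ?thesis
    using assms(2,3) by (simp add: u_seq_def v_seq_def uv_sum_def bracket_eq_continuant)
qed

lemma uv_sum_increment_le:
  assumes ge2: "\<forall>x\<in>set (xs @ y # ys). x \<ge> 2"
    and j: "1 \<le> j" "j \<le> length xs + 1"
    and ge3: "j \<le> length xs \<Longrightarrow> xs ! (j - 1) \<ge> 3"
  shows "uv_sum (xs @ (y + 1) # ys) j \<le> uv_sum (xs @ y # ys) j + continuant xs * continuant ys"
proof -
  have xs: "\<forall>x\<in>set xs. x \<ge> 2" and ys: "\<forall>x\<in>set ys. x \<ge> 2"
    using ge2 by auto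
  have cxs: "1 \<le> continuant xs" and cys: "1 \<le> continuant ys"
    using continuant_pos xs ys by auto
  show ?thesis
  proof (cases "j = length xs + 1")
    case True
    have "continuant xs \<le> continuant xs * continuant ys"
      using cxs cys by simp
    then show ?thesis
      using continuant_increment[of xs y "[]"] by (simp add: True uv_sum_def)
  next
    case False
    then have "j \<le> length xs" using j by simp
    then have split: "drop (j - 1) xs = xs ! (j - 1) # drop j xs"
      using j Cons_nth_drop_Suc[of "j - 1" xs] by simp
    have tails_xs: "\<forall>x\<in>set (drop j xs). x \<ge> 2"
      using xs set_drop_subset by fast
    have "continuant (drop j xs) + continuant (drop (Suc j) xs) \<le> continuant (drop (j - 1) xs)"
      using continuant_two_tails_le[OF ge3[OF \<open>j \<le> length xs\<close>] tails_xs]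
      unfolding split by (simp add: drop_Suc tl_drop)
    also have "\<dots> \<le> continuant xs"
      using continuant_drop_le[OF xs] .
    finally have "(continuant (drop j xs) + continuant (drop (Suc j) xs)) * continuant ys
        \<le> continuant xs * continuant ys"
      using cys by (intro mult_right_mono) auto
    then show ?thesis
      using \<open>j \<le> length xs\<close> continuant_drop_increment_le[OF ys, of j xs y]
        continuant_drop_increment_le[OF ys, of "Suc j" xs y]
      by (simp add: uv_sum_def algebra_simps)
  qed
qed

theorem lemma4p5:
  fixes ns :: "int list" and j k :: nat
  assumes "\<forall>x\<in>set ns. x \<ge> 2"
    and "1 \<le> j" and "j \<le> k" and "k \<le> length ns - 1"
    and "ns ! (j - 1) \<ge> 3"
    and "u_seq ns j + u_seq ns (j + 1) + v_seq ns j + v_seq ns (j + 1) \<le> bracket ns"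
  shows "let ns' = ns[k - 1 := ns ! (k - 1) + 1] in
    u_seq ns' j + u_seq ns' (j + 1) + v_seq ns' j + v_seq ns' (j + 1) \<le> bracket ns'"
proof -
  define xs y ys where "xs = take (k - 1) ns" and "y = ns ! (k - 1)" and "ys = drop k ns"
  have k: "k - 1 < length ns" "length xs = k - 1"
    using assms(2-4) by (simp_all add: xs_def)
  have ns: "ns = xs @ y # ys"
    using id_take_nth_drop[OF k(1)] assms(2,3) by (simp add: xs_def y_def ys_def)
  have ns': "ns[k - 1 := ns ! (k - 1) + 1] = xs @ (y + 1) # ys"
    using upd_conv_take_nth_drop[OF k(1)] assms(2,3) by (simp add: xs_def y_def ys_def)
  have ge2: "\<forall>x\<in>set (xs @ y # ys). x \<ge> 2" "\<forall>x\<in>set (xs @ (y + 1) # ys). x \<ge> 2"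
    using assms(1) by (auto simp: ns)
  have "uv_sum (xs @ (y + 1) # ys) j \<le> uv_sum (xs @ y # ys) j + continuant xs * continuant ys"
    using assms(2,3,5) k
    by (intro uv_sum_increment_le[OF ge2(1)]) (auto simp: ns nth_append split: if_splits)
  also have "uv_sum (xs @ y # ys) j \<le> bracket (xs @ y # ys)"
    using assms(2-4,6) uv_sum_eq[OF ge2(1)] by (simp add: ns)
  also have "bracket (xs @ y # ys) + continuant xs * continuant ys = bracket (xs @ (y + 1) # ys)"
    using ge2 by (simp add: bracket_eq_continuant continuant_increment)
  finally show ?thesis
    unfolding Let_def ns' using assms(2-4) uv_sum_eq[OF ge2(2)] by (simp add: ns)
qed

end
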